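(* Let $G\subseteq \mathrm{GL}_n(\mathbb{C})$ be a closed subgroup with left Haar measure $\mu$, let $\Gamma\subset G$ be a discrete subgroup, and let $\mathcal{F}_\Gamma\subset G$ be a measurable fundamental domain for $\Gamma$ (the translates $u\mathcal{F}_\Gamma$, $u\in\Gamma$, are pairwise disjoint) with $0<\mu(\mathcal{F}_\Gamma)<\infty$ and $R_\Gamma:=\sup_{g\in\mathcal{F}_\Gamma}\|g\|<\infty$. For $x\in G$ and $M>0$ let $B_x(M)=\{g\in G:\|xg\|\le M\}$. Then for all $x\in G$, $a\in M_{m,n}(\mathbb{C})$, $c>0$ and $M>0$, $$\sum_{u\in\Gamma\cap B_x(M)}e^{-c\|au\|^2}\le\frac{1}{\mu(\mathcal{F}_\Gamma)}\int_{B_x(R_\Gamma M)}e^{-\frac{c}{R_\Gamma^2}\|ag\|^2}\,d\mu(g).$$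
   Context: $\|\cdot\|$ denotes the Frobenius norm of a (possibly rectangular) complex matrix. *)

theory Defs
  imports "HOL-Analysis.Analysis"
begin

definition frob_norm :: "complex^'n^'m \<Rightarrow> real" where
  "frob_norm A = sqrt (\<Sum>i\<in>UNIV. \<Sum>j\<in>UNIV. (cmod (A $ i $ j))\<^sup>2)"

definition GL :: "(complex^'n^'n) set" where
  "GL = {A. invertible A}"

definition closed_subgroup_GL :: "(complex^'n^'n) set \<Rightarrow> bool" where
  "closed_subgroup_GL G \<longleftrightarrow>
     G \<subseteq> GL \<and> mat 1 \<in> G \<and>
     (\<forall>x\<in>G. \<forall>y\<in>G. x ** y \<in> G) \<and>
     (\<forall>x\<in>G. matrix_inv x \<in> G) \<and>
     closedin (top_of_set GL) G"

definition left_haar_measure :: "(complex^'n^'n) set \<Rightarrow> (complex^'n^'n) measure \<Rightarrow> bool" where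
  "left_haar_measure G \<mu> \<longleftrightarrow>
     sets \<mu> = sets (restrict_space borel G) \<and>
     (\<forall>x\<in>G. \<forall>A\<in>sets \<mu>. emeasure \<mu> ((\<lambda>g. x ** g) ` A) = emeasure \<mu> A) \<and>
     (\<forall>K. compact K \<and> K \<subseteq> G \<longrightarrow> emeasure \<mu> K < \<infinity>) \<and>
     (\<forall>U. openin (top_of_set G) U \<and> U \<noteq> {} \<longrightarrow> emeasure \<mu> U > 0) \<and>
     (\<forall>A\<in>sets \<mu>. emeasure \<mu> A =
        (INF U\<in>{U. openin (top_of_set G) U \<and> A \<subseteq> U}. emeasure \<mu> U)) \<and>
     (\<forall>U. openin (top_of_set G) U \<longrightarrow>
        emeasure \<mu> U = (SUP K\<in>{K. compact K \<and> K \<subseteq> U}. emeasure \<mu> K))"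

definition discrete_subgroup :: "(complex^'n^'n) set \<Rightarrow> (complex^'n^'n) set \<Rightarrow> bool" where
  "discrete_subgroup \<Gamma> G \<longleftrightarrow>
     \<Gamma> \<subseteq> G \<and> mat 1 \<in> \<Gamma> \<and>
     (\<forall>x\<in>\<Gamma>. \<forall>y\<in>\<Gamma>. x ** y \<in> \<Gamma>) \<and>
     (\<forall>x\<in>\<Gamma>. matrix_inv x \<in> \<Gamma>) \<and>
     (\<forall>u\<in>\<Gamma>. \<exists>e>0. \<forall>v\<in>\<Gamma>. dist u v < e \<longrightarrow> v = u)"

definition measurable_fundamental_domain ::
  "(complex^'n^'n) measure \<Rightarrow> (complex^'n^'n) set \<Rightarrow> (complex^'n^'n) set \<Rightarrow> (complex^'n^'n) set \<Rightarrow> bool" where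
  "measurable_fundamental_domain \<mu> G \<Gamma> F \<longleftrightarrow>
     F \<in> sets \<mu> \<and> F \<subseteq> G \<and>
     (\<forall>u\<in>\<Gamma>. \<forall>v\<in>\<Gamma>. u \<noteq> v \<longrightarrow> ((\<lambda>g. u ** g) ` F) \<inter> ((\<lambda>g. v ** g) ` F) = {}) \<and>
     (\<Union>u\<in>\<Gamma>. (\<lambda>g. u ** g) ` F) = G"

definition Bset :: "(complex^'n^'n) set \<Rightarrow> complex^'n^'n \<Rightarrow> real \<Rightarrow> (complex^'n^'n) set" where
  "Bset G x M = {g\<in>G. frob_norm (x ** g) \<le> M}"

end

theory Submission
  imports Defs
begin

text \<open>Each \<open>u \<in> \<Gamma> \<inter> B\<^sub>x(M)\<close> owns the tile \<open>u F\<close>, of measure \<open>\<mu>(F)\<close> by left invariance, and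
  these tiles are pairwise disjoint. A point \<open>g = u f\<close> of the tile has \<open>\<parallel>f\<parallel> \<le> R\<close>, so by
  submultiplicativity of the Frobenius norm \<open>\<parallel>x g\<parallel> \<le> R M\<close> and \<open>\<parallel>a g\<parallel> \<le> R \<parallel>a u\<parallel>\<close>; hence the
  summand \<open>exp (- c \<parallel>a u\<parallel>\<^sup>2)\<close> is dominated on the whole tile by the integrand
  \<open>exp (- c / R\<^sup>2 \<parallel>a g\<parallel>\<^sup>2)\<close> restricted to \<open>B\<^sub>x(R M)\<close>. Integrating over the disjoint tiles bounds
  \<open>\<mu>(F)\<close> times every finite partial sum by the integral, and a sum of nonnegative terms is the
  supremum of its finite partial sums.\<close>

lemma nn_integral_count_space_leI:
  fixes f :: "'a \<Rightarrow> ennreal"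
  assumes finite_sums: "\<And>S. finite S \<Longrightarrow> S \<subseteq> A \<Longrightarrow> sum f S \<le> B"
  shows "(\<integral>\<^sup>+x. f x \<partial>count_space A) \<le> B"
  unfolding nn_integral_def
proof (rule Sup_least, clarify)
  fix g assume g_simple: "simple_function (count_space A) g" and "g \<le> f"
  define P where "P = {a\<in>A. 0 < g a}"
  have sum_g: "sum g S \<le> B" if "finite S" "S \<subseteq> P" for S
  proof -
    have "sum g S \<le> sum f S" using \<open>g \<le> f\<close> by (intro sum_mono) (simp add: le_fun_def)
    also have "\<dots> \<le> B" using that by (intro finite_sums) (auto simp: P_def)
    finally show ?thesis .
  qed
  show "integral\<^sup>S (count_space A) g \<le> B"
  proof (cases "finite P")
    case True
    have "integral\<^sup>S (count_space A) g = (\<Sum>a\<in>P. g a)"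
      using nn_integral_eq_simple_integral[OF g_simple] nn_integral_count_space[OF True[unfolded P_def]]
      by (simp add: P_def)
    with sum_g True show ?thesis by simp
  next
    case False
    \<comment> \<open>A simple function takes finitely many values, so it is bounded below by a positive
       constant on the infinite set where it is positive; hence its finite sums are unbounded.\<close>
    have "finite (g ` P)" "g ` P \<noteq> {}"
      using g_simple False by (auto simp: P_def intro: finite_subset)
    then have "0 < Min (g ` P)" "\<And>a. a \<in> P \<Longrightarrow> Min (g ` P) \<le> g a"
      using Min_in by (auto simp: P_def)
    then have "\<infinity> = infsum g P"
      using False by (intro infsum_superconst_infinite_ennreal[symmetric])
    also have "\<dots> = (SUP S\<in>{S. finite S \<and> S \<subseteq> P}. sum g S)"
      by (rule nonneg_infsum_complete) simp
    also have "\<dots> \<le> B" using sum_g by (auto intro: SUP_least)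
    finally show ?thesis by (simp add: top_unique)
  qed
qed

lemma sum_cmult_emeasure_le_nn_integral:
  fixes T :: "'i \<Rightarrow> 'a set" and e :: "'i \<Rightarrow> ennreal"
  assumes "finite S" and "disjoint_family_on T S" and "\<And>i. i \<in> S \<Longrightarrow> T i \<in> sets M"
    and "\<And>i x. i \<in> S \<Longrightarrow> x \<in> T i \<Longrightarrow> e i \<le> h x"
  shows "(\<Sum>i\<in>S. e i * emeasure M (T i)) \<le> (\<integral>\<^sup>+x. h x \<partial>M)"
proof -
  have pointwise: "(\<Sum>i\<in>S. e i * indicator (T i) x) \<le> h x" for x
  proof (cases "\<exists>i\<in>S. x \<in> T i")
    case True
    then obtain i where i: "i \<in> S" "x \<in> T i" by blast
    have "x \<notin> T j" if "j \<in> S" "j \<noteq> i" for j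
      using assms(2) i that by (auto simp: disjoint_family_on_def)
    then have "(\<Sum>j\<in>S. e j * indicator (T j) x) = e i"
      using i by (subst sum.remove[OF assms(1) i(1)]) (simp add: sum.neutral)
    then show ?thesis using i assms(4) by simp
  qed simp
  have "(\<Sum>i\<in>S. e i * emeasure M (T i)) = (\<Sum>i\<in>S. \<integral>\<^sup>+x. e i * indicator (T i) x \<partial>M)"
    using assms(3) by (simp add: nn_integral_cmult_indicator)
  also have "\<dots> = (\<integral>\<^sup>+x. (\<Sum>i\<in>S. e i * indicator (T i) x) \<partial>M)"
    using assms(3) by (intro nn_integral_sum[symmetric]) auto
  also have "\<dots> \<le> (\<integral>\<^sup>+x. h x \<partial>M)"
    by (intro nn_integral_mono pointwise)
  finally show ?thesis .
qed

lemma frob_norm_nonneg: "0 \<le> frob_norm A"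
  by (simp add: frob_norm_def sum_nonneg)

lemma frob_norm_mult_le:
  fixes A :: "complex^'k^'m" and B :: "complex^'n^'k"
  shows "frob_norm (A ** B) \<le> frob_norm A * frob_norm B"
proof -
  have entry: "(cmod ((A ** B) $ i $ j))\<^sup>2
      \<le> (\<Sum>k\<in>UNIV. (cmod (A $ i $ k))\<^sup>2) * (\<Sum>k\<in>UNIV. (cmod (B $ k $ j))\<^sup>2)" for i j
  proof -
    have "cmod ((A ** B) $ i $ j) \<le> (\<Sum>k\<in>UNIV. cmod (A $ i $ k) * cmod (B $ k $ j))"
      unfolding matrix_matrix_mult_def by (simp add: order_trans[OF norm_sum] norm_mult)
    then have "(cmod ((A ** B) $ i $ j))\<^sup>2 \<le> (\<Sum>k\<in>UNIV. cmod (A $ i $ k) * cmod (B $ k $ j))\<^sup>2"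
      by (rule power_mono) simp
    also have "\<dots> \<le> (\<Sum>k\<in>UNIV. (cmod (A $ i $ k))\<^sup>2) * (\<Sum>k\<in>UNIV. (cmod (B $ k $ j))\<^sup>2)"
      by (rule Cauchy_Schwarz_ineq_sum)
    finally show ?thesis .
  qed
  have "(\<Sum>i\<in>UNIV. \<Sum>j\<in>UNIV. (cmod ((A ** B) $ i $ j))\<^sup>2)
      \<le> (\<Sum>i\<in>UNIV. \<Sum>j\<in>UNIV. (\<Sum>k\<in>UNIV. (cmod (A $ i $ k))\<^sup>2) * (\<Sum>k\<in>UNIV. (cmod (B $ k $ j))\<^sup>2))"
    by (intro sum_mono entry)
  also have "\<dots> = (\<Sum>i\<in>UNIV. \<Sum>k\<in>UNIV. (cmod (A $ i $ k))\<^sup>2) * (\<Sum>j\<in>UNIV. \<Sum>k\<in>UNIV. (cmod (B $ k $ j))\<^sup>2)"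
    by (rule sum_product[symmetric])
  also have "(\<Sum>j\<in>UNIV. \<Sum>k\<in>UNIV. (cmod (B $ k $ j))\<^sup>2) = (\<Sum>k\<in>UNIV. \<Sum>j\<in>UNIV. (cmod (B $ k $ j))\<^sup>2)"
    by (rule sum.swap)
  finally have "(\<Sum>i\<in>UNIV. \<Sum>j\<in>UNIV. (cmod ((A ** B) $ i $ j))\<^sup>2) \<le> (frob_norm A * frob_norm B)\<^sup>2"
    unfolding frob_norm_def by (simp add: sum_nonneg power_mult_distrib)
  then have "frob_norm (A ** B) \<le> sqrt ((frob_norm A * frob_norm B)\<^sup>2)"
    unfolding frob_norm_def[of "A ** B"] by (rule real_sqrt_le_mono)
  then show ?thesis by (simp add: frob_norm_nonneg)
qed

lemma gaussian_le_gaussian_mult_right: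
  fixes a :: "complex^'k^'m" and u :: "complex^'l^'k" and f :: "complex^'n^'l"
  assumes "frob_norm f \<le> R" and "0 \<le> c"
  shows "exp (- c * (frob_norm (a ** u))\<^sup>2) \<le> exp (- (c / R\<^sup>2) * (frob_norm (a ** u ** f))\<^sup>2)"
proof (cases "R = 0")
  case False
  have "frob_norm (a ** u ** f) \<le> frob_norm (a ** u) * R"
    using frob_norm_mult_le[of "a ** u" f] assms(1)
    by (meson frob_norm_nonneg mult_left_mono order_trans)
  then have "(frob_norm (a ** u ** f))\<^sup>2 \<le> (frob_norm (a ** u) * R)\<^sup>2"
    by (intro power_mono frob_norm_nonneg)
  then have "(c / R\<^sup>2) * (frob_norm (a ** u ** f))\<^sup>2 \<le> (c / R\<^sup>2) * (frob_norm (a ** u) * R)\<^sup>2"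
    using assms(2) by (intro mult_left_mono) auto
  also have "\<dots> = c * (frob_norm (a ** u))\<^sup>2"
    using False by (simp add: power_mult_distrib)
  finally show ?thesis by simp
qed (use assms(2) in simp)

lemma closed_subgroup_GL_matrix_inv:
  assumes "closed_subgroup_GL G" and "g \<in> G"
  shows "g ** matrix_inv g = mat 1" and "matrix_inv g ** g = mat 1"
proof -
  have "invertible g" using assms by (auto simp: closed_subgroup_GL_def GL_def)
  then have "g ** matrix_inv g = mat 1 \<and> matrix_inv g ** g = mat 1"
    unfolding invertible_def matrix_inv_def by (rule someI_ex)
  then show "g ** matrix_inv g = mat 1" and "matrix_inv g ** g = mat 1" by auto
qed

lemma borel_measurable_matrix_mult_left: "(\<lambda>h::complex^'n^'k. C ** h) \<in> borel_measurable borel"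
proof -
  have "linear (\<lambda>h::complex^'n^'k. C ** h)"
    by (simp add: linear_iff vec_eq_iff matrix_matrix_mult_def sum.distrib distrib_left
        scaleR_sum_right mult_scaleR_right)
  then have "continuous_on UNIV (\<lambda>h::complex^'n^'k. C ** h)"
    by (intro linear_continuous_on linear_conv_bounded_linear[THEN iffD1])
  then show ?thesis by (rule borel_measurable_continuous_onI)
qed

lemma left_translate_in_sets_restrict_borel:
  assumes G: "closed_subgroup_GL G" and "u \<in> G" and A: "A \<in> sets (restrict_space borel G)"
  shows "(\<lambda>g. u ** g) ` A \<in> sets (restrict_space borel G)"
proof -
  have mult: "y ** z \<in> G" and inv: "matrix_inv y \<in> G" if "y \<in> G" "z \<in> G" for y z
    using G that by (auto simp: closed_subgroup_GL_def)
  have "A \<subseteq> G" using sets.sets_into_space[OF A] by (simp add: space_restrict_space)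
  then have image_eq: "(\<lambda>g. u ** g) ` A = (\<lambda>h. matrix_inv u ** h) -` A \<inter> G"
    using closed_subgroup_GL_matrix_inv[OF G \<open>u \<in> G\<close>] mult inv \<open>u \<in> G\<close>
    by (force simp: matrix_mul_assoc)
  have "(\<lambda>h. matrix_inv u ** h) \<in> restrict_space borel G \<rightarrow>\<^sub>M restrict_space borel G"
    using mult inv \<open>u \<in> G\<close>
    by (intro measurable_restrict_space1 measurable_restrict_space2 borel_measurable_matrix_mult_left)
      (auto simp: space_restrict_space)
  from measurable_sets[OF this A] show ?thesis
    by (simp add: image_eq space_restrict_space)
qed

lemma Bset_mult_right:
  assumes "closed_subgroup_GL G" and "u \<in> Bset G x M" and "f \<in> G"
    and "frob_norm f \<le> R" and "0 \<le> M"
  shows "u ** f \<in> Bset G x (R * M)"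
proof -
  have "frob_norm (x ** (u ** f)) \<le> frob_norm (x ** u) * frob_norm f"
    by (simp add: matrix_mul_assoc frob_norm_mult_le)
  also have "\<dots> \<le> M * R"
    using assms by (intro mult_mono) (auto simp: Bset_def frob_norm_nonneg)
  finally show ?thesis
    using assms by (auto simp: Bset_def closed_subgroup_GL_def mult.commute)
qed

lemma fundamental_domain_sum_le_nn_integral:
  fixes e h :: "complex^'n^'n \<Rightarrow> ennreal"
  assumes G: "closed_subgroup_GL G" and \<mu>: "left_haar_measure G \<mu>"
    and F: "measurable_fundamental_domain \<mu> G \<Gamma> F"
    and "finite S" and "S \<subseteq> \<Gamma>" and "\<Gamma> \<subseteq> G"
    and e_le_h: "\<And>u f. u \<in> S \<Longrightarrow> f \<in> F \<Longrightarrow> e u \<le> h (u ** f)"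
  shows "(\<Sum>u\<in>S. e u) * emeasure \<mu> F \<le> (\<integral>\<^sup>+g. h g \<partial>\<mu>)"
proof -
  define T where "T u = (\<lambda>g. u ** g) ` F" for u :: "complex^'n^'n"
  have S_sub: "u \<in> G" if "u \<in> S" for u using that assms(5,6) by auto
  have sets_\<mu>: "sets \<mu> = sets (restrict_space borel G)"
    and translate: "\<And>u A. u \<in> G \<Longrightarrow> A \<in> sets \<mu> \<Longrightarrow> emeasure \<mu> ((\<lambda>g. u ** g) ` A) = emeasure \<mu> A"
    using \<mu> by (auto simp: left_haar_measure_def)
  have F_sets: "F \<in> sets \<mu>"
    and disjoint: "\<And>u v. u \<in> \<Gamma> \<Longrightarrow> v \<in> \<Gamma> \<Longrightarrow> u \<noteq> v \<Longrightarrow> T u \<inter> T v = {}"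
    using F by (auto simp: measurable_fundamental_domain_def T_def)
  have "(\<Sum>u\<in>S. e u) * emeasure \<mu> F = (\<Sum>u\<in>S. e u * emeasure \<mu> (T u))"
    using translate[OF S_sub F_sets] by (simp add: sum_distrib_right T_def)
  also have "\<dots> \<le> (\<integral>\<^sup>+g. h g \<partial>\<mu>)"
  proof (rule sum_cmult_emeasure_le_nn_integral)
    show "T u \<in> sets \<mu>" if "u \<in> S" for u
      using left_translate_in_sets_restrict_borel[OF G S_sub[OF that]] F_sets
      by (simp add: sets_\<mu> T_def)
    show "disjoint_family_on T S"
      using disjoint assms(5) by (auto simp: disjoint_family_on_def)
    show "e u \<le> h g" if "u \<in> S" "g \<in> T u" for u g
      using that e_le_h by (auto simp: T_def)
  qed fact+
  finally show ?thesis .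
qed

theorem mainTheorem7:
  fixes G \<Gamma> F :: "(complex^'n^'n) set"
    and \<mu> :: "(complex^'n^'n) measure"
    and x :: "complex^'n^'n"
    and a :: "complex^'n^'m"
    and c M R :: real
  assumes "closed_subgroup_GL G"
    and "left_haar_measure G \<mu>"
    and "discrete_subgroup \<Gamma> G"
    and "measurable_fundamental_domain \<mu> G \<Gamma> F"
    and "0 < emeasure \<mu> F" and "emeasure \<mu> F < \<infinity>"
    and "bdd_above (frob_norm ` F)"
    and "R = Sup (frob_norm ` F)"
    and "x \<in> G" and "c > 0" and "M > 0"
  shows "(\<integral>\<^sup>+ u. ennreal (exp (- c * (frob_norm (a ** u))\<^sup>2)) \<partial>count_space (\<Gamma> \<inter> Bset G x M))
         \<le> (\<integral>\<^sup>+ g. indicator (Bset G x (R * M)) g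
                  * ennreal (exp (- (c / R\<^sup>2) * (frob_norm (a ** g))\<^sup>2)) \<partial>\<mu>)
            / emeasure \<mu> F"
proof -
  define e where "e u = ennreal (exp (- c * (frob_norm (a ** u))\<^sup>2))" for u :: "complex^'n^'n"
  define h where "h g = indicator (Bset G x (R * M)) g * ennreal (exp (- (c / R\<^sup>2) * (frob_norm (a ** g))\<^sup>2))" for g
  have F_sub: "F \<subseteq> G" and \<Gamma>_sub: "\<Gamma> \<subseteq> G"
    using assms(3,4) by (auto simp: measurable_fundamental_domain_def discrete_subgroup_def)
  have F_norm: "frob_norm f \<le> R" if "f \<in> F" for f
    using assms(7,8) that by (auto intro: cSup_upper)
  have e_le_h: "e u \<le> h (u ** f)" if u: "u \<in> \<Gamma> \<inter> Bset G x M" and f: "f \<in> F" for u f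
  proof -
    have "u ** f \<in> Bset G x (R * M)"
      using Bset_mult_right[OF assms(1), of u x M f R] f F_sub F_norm u assms(11) by auto
    moreover have "exp (- c * (frob_norm (a ** u))\<^sup>2) \<le> exp (- (c / R\<^sup>2) * (frob_norm (a ** u ** f))\<^sup>2)"
      using F_norm f assms(10) by (intro gaussian_le_gaussian_mult_right) auto
    ultimately show ?thesis by (simp add: e_def h_def matrix_mul_assoc ennreal_leI)
  qed
  have "(\<integral>\<^sup>+u. e u \<partial>count_space (\<Gamma> \<inter> Bset G x M)) \<le> (\<integral>\<^sup>+g. h g \<partial>\<mu>) / emeasure \<mu> F"
  proof (rule nn_integral_count_space_leI)
    fix S assume "finite S" "S \<subseteq> \<Gamma> \<inter> Bset G x M"
    then have "(\<Sum>u\<in>S. e u) * emeasure \<mu> F / emeasure \<mu> F \<le> (\<integral>\<^sup>+g. h g \<partial>\<mu>) / emeasure \<mu> F"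
      using \<Gamma>_sub
      by (intro divide_right_mono_ennreal fundamental_domain_sum_le_nn_integral[OF assms(1,2,4)])
        (auto intro: e_le_h)
    then show "sum e S \<le> (\<integral>\<^sup>+g. h g \<partial>\<mu>) / emeasure \<mu> F"
      using assms(5,6) by (simp add: ennreal_mult_divide_eq)
  qed
  then show ?thesis by (simp add: e_def h_def)
qed

end
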